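(* For every $n\geq 1$, the Fibonacci-sum set-graph $G^F_{A^{(n)}}$ is connected.
   Context: Let $\mathcal{F}=\{f_m\}_{m\ge 0}$ be the Fibonacci numbers, $f_0=0$, $f_1=1$, $f_m=f_{m-1}+f_{m-2}$. For $n\in\mathbb{N}$ let $A^{(n)}=\{1,2,\dots,n\}$. The Fibonacci-sum set-graph $G^F_{A^{(n)}}$ is the multigraph (loops and multiple edges allowed) whose vertices are in bijection with the nonempty subsets of $A^{(n)}$; between the vertices corresponding to distinct subsets $S,T$ there is one edge for each pair $(i',j')$ with $i'\in S$, $j'\in T$, $i'\neq j'$ and $i'+j'\in\mathcal{F}$, and at the vertex corresponding to $S$ there is one loop for each pair of distinct elements $i',j'\in S$ with $i'+j'\in\mathcal{F}$. *)

theory Defs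
  imports Main "HOL-Number_Theory.Fib"
begin

definition is_fib :: "nat \<Rightarrow> bool" where
  "is_fib m \<longleftrightarrow> (\<exists>k. fib k = m)"

text \<open>Vertices of the Fibonacci-sum set-graph on A^(n) = {1..n}: nonempty subsets.\<close>
definition fsg_vertices :: "nat \<Rightarrow> nat set set" where
  "fsg_vertices n = {S. S \<subseteq> {1..n} \<and> S \<noteq> {}}"

definition fsg_edge_mult :: "nat set \<Rightarrow> nat set \<Rightarrow> nat" where
  "fsg_edge_mult S T = card {(i, j). i \<in> S \<and> j \<in> T \<and> i \<noteq> j \<and> is_fib (i + j)}"

definition fsg_loop_mult :: "nat set \<Rightarrow> nat" where
  "fsg_loop_mult S = card {{i, j} | i j. i \<in> S \<and> j \<in> S \<and> i \<noteq> j \<and> is_fib (i + j)}"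

definition fsg_adj :: "nat \<Rightarrow> nat set \<Rightarrow> nat set \<Rightarrow> bool" where
  "fsg_adj n S T \<longleftrightarrow> S \<in> fsg_vertices n \<and> T \<in> fsg_vertices n \<and> S \<noteq> T
     \<and> fsg_edge_mult S T > 0"

text \<open>A (multi)graph is connected: nonempty vertex set, and any two vertices are joined
  by a walk (loops are irrelevant for connectivity).\<close>
definition fsg_connected :: "nat \<Rightarrow> bool" where
  "fsg_connected n \<longleftrightarrow> fsg_vertices n \<noteq> {} \<and>
     (\<forall>S\<in>fsg_vertices n. \<forall>T\<in>fsg_vertices n. (fsg_adj n)\<^sup>*\<^sup>* S T)"

end

theory Submission
  imports Defs
begin

text \<open>Every vertex S is adjacent to the full vertex {1..n}: for any i in S there is a
  j in {1..n}, j distinct from i, with i + j Fibonacci. For i = 1 take j = 2; for i \<ge> 2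
  take j = F - i, where F is the least Fibonacci number exceeding i, which lies strictly
  between 0 and i because the previous Fibonacci number is at most i and exceeds F - i.
  So every walk can be routed through {1..n}.\<close>

lemma less_fib_Suc_Suc: "n < fib (Suc (Suc n))"
proof (induction n)
  case (Suc n)
  have "fib (Suc (Suc (Suc n))) = fib (Suc (Suc n)) + fib (Suc n)"
    using fib_plus_2[of "Suc n"] by simp
  with Suc fib_neq_0_nat[of "Suc n"] show ?case by simp
qed simp

lemma fib_less_fib_Suc: "2 \<le> k \<Longrightarrow> fib k < fib (Suc k)"
  using fib_plus_2[of "k - 1"] fib_neq_0_nat[of "k - 1"] by (simp add: numeral_2_eq_2)

lemma fib_bracket:
  assumes "2 \<le> i"
  obtains m where "3 \<le> m" "fib m \<le> i" "i < fib (Suc m)"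
proof -
  define k where "k = (LEAST k. i < fib k)"
  have above: "i < fib k"
    unfolding k_def by (rule LeastI[of _ "Suc (Suc i)"]) (rule less_fib_Suc_Suc)
  have below: "fib m \<le> i" if "m < k" for m
    using that not_less_Least unfolding k_def by (metis not_le)
  have "k \<noteq> 0" using above by (cases k) auto
  then obtain m where k: "k = Suc m" using not0_implies_Suc by blast
  have "fib m \<le> i" using below k by simp
  moreover have "3 \<le> m"
  proof (rule ccontr)
    assume "\<not> 3 \<le> m"
    then have "m = 0 \<or> m = 1 \<or> m = 2" by auto
    then show False using above k assms by (auto simp: numeral_3_eq_3)
  qed
  ultimately show ?thesis using that above k by blast
qed

lemma exists_fib_partner_below:
  assumes "2 \<le> i"
  shows "\<exists>j. 0 < j \<and> j < i \<and> is_fib (i + j)"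
proof -
  obtain m where m: "3 \<le> m" "fib m \<le> i" "i < fib (Suc m)"
    using fib_bracket assms by blast
  have "fib (Suc m) = fib m + fib (m - 1)"
    using fib_plus_2[of "m - 1"] m(1) by (simp add: numeral_2_eq_2 Suc_diff_Suc)
  moreover have "fib (m - 1) < fib m"
    using fib_less_fib_Suc[of "m - 1"] m(1) by simp
  ultimately have "fib (Suc m) < 2 * i" using m(2) by linarith
  then have "fib (Suc m) - i < i" by linarith
  moreover have "0 < fib (Suc m) - i" using m(3) by simp
  moreover have "is_fib (i + (fib (Suc m) - i))"
    unfolding is_fib_def using m(3) by (metis add_diff_inverse_nat not_less_iff_gr_or_eq)
  ultimately show ?thesis by blast
qed

lemma exists_fib_partner:
  assumes "i \<in> {1..n}" "2 \<le> n"
  shows "\<exists>j\<in>{1..n}. j \<noteq> i \<and> is_fib (i + j)"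
proof (cases "i = 1")
  case True
  have "is_fib 3" unfolding is_fib_def
    by (rule exI[of _ 4]) (simp add: numeral_eq_Suc)
  with True assms(2) show ?thesis by (intro bexI[of _ 2]) (simp_all add: numeral_3_eq_3)
next
  case False
  with assms(1) have "2 \<le> i" by simp
  then obtain j where "0 < j" "j < i" "is_fib (i + j)"
    using exists_fib_partner_below by blast
  with assms(1) show ?thesis by (intro bexI[of _ j]) auto
qed

lemma fsg_edge_mult_pos_iff:
  assumes "finite S" "finite T"
  shows "0 < fsg_edge_mult S T \<longleftrightarrow> (\<exists>i\<in>S. \<exists>j\<in>T. i \<noteq> j \<and> is_fib (i + j))"
proof -
  have "{(i, j). i \<in> S \<and> j \<in> T \<and> i \<noteq> j \<and> is_fib (i + j)} \<subseteq> S \<times> T" by auto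
  then have "finite {(i, j). i \<in> S \<and> j \<in> T \<and> i \<noteq> j \<and> is_fib (i + j)}"
    using assms finite_subset by blast
  then show ?thesis unfolding fsg_edge_mult_def by (auto simp: card_gt_0_iff)
qed

lemma finite_fsg_vertex: "S \<in> fsg_vertices n \<Longrightarrow> finite S"
  unfolding fsg_vertices_def using finite_subset by blast

lemma fsg_adj_sym: "fsg_adj n S T \<Longrightarrow> fsg_adj n T S"
proof -
  assume adj: "fsg_adj n S T"
  then have fin: "finite S" "finite T" unfolding fsg_adj_def by (auto intro: finite_fsg_vertex)
  from adj have "\<exists>i\<in>S. \<exists>j\<in>T. i \<noteq> j \<and> is_fib (i + j)"
    unfolding fsg_adj_def fsg_edge_mult_pos_iff[OF fin] by blast
  then have "\<exists>j\<in>T. \<exists>i\<in>S. j \<noteq> i \<and> is_fib (j + i)" by (metis add.commute)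
  with adj show ?thesis
    unfolding fsg_adj_def fsg_edge_mult_pos_iff[OF fin(2,1)] by blast
qed

lemma fsg_adj_full_set:
  assumes "2 \<le> n" "S \<in> fsg_vertices n" "S \<noteq> {1..n}"
  shows "fsg_adj n S {1..n}"
proof -
  have full: "{1..n} \<in> fsg_vertices n" using assms(1) unfolding fsg_vertices_def by auto
  obtain i where i: "i \<in> S" "i \<in> {1..n}" using assms(2) unfolding fsg_vertices_def by blast
  then obtain j where "j \<in> {1..n}" "i \<noteq> j" "is_fib (i + j)"
    using exists_fib_partner[OF i(2) assms(1)] by metis
  with i have "0 < fsg_edge_mult S {1..n}"
    using fsg_edge_mult_pos_iff[OF finite_fsg_vertex[OF assms(2)] finite_atLeastAtMost] by blast
  with full assms(2,3) show ?thesis unfolding fsg_adj_def by blast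
qed

theorem corollary2p2:
  fixes n :: nat
  assumes "n \<ge> 1"
  shows "fsg_connected n"
proof (cases "n = 1")
  case True
  then have "fsg_vertices n = {{1}}" unfolding fsg_vertices_def by auto
  then show ?thesis unfolding fsg_connected_def by auto
next
  case False
  with assms have n: "2 \<le> n" by simp
  have to_full: "(fsg_adj n)\<^sup>*\<^sup>* S {1..n}" if "S \<in> fsg_vertices n" for S
    using fsg_adj_full_set[OF n that] by (cases "S = {1..n}") auto
  have from_full: "(fsg_adj n)\<^sup>*\<^sup>* {1..n} S" if "S \<in> fsg_vertices n" for S
    using fsg_adj_sym[OF fsg_adj_full_set[OF n that]] by (cases "S = {1..n}") auto
  have "{1..n} \<in> fsg_vertices n" using n unfolding fsg_vertices_def by auto
  then show ?thesis
    unfolding fsg_connected_def using to_full from_full rtranclp_trans by fast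
qed

end
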